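(* Assume $A$ has no eigenvalue equal to $1$, let $M=C(I-A)^{-1}$ and $\gamma>0$. Suppose $\lambda\in\mathbb{R}_+$, $P\in\mathbb{S}^{n_x}_{\succ0}$, $\tilde Z\in\mathbb{S}^{n_y}_{\succ0}$, $G\in\mathbb{R}^{n_x\times n_y}$, $Y\in\mathbb{R}^{n_y\times n_a}$ satisfy $$\begin{bmatrix}P & PA-GC & PB_\omega-GD_\omega\\ * & P & 0\\ * & * & I\end{bmatrix}\succ0,\qquad \begin{bmatrix}\tilde Z & \tilde ZC & \tilde ZD_\omega\\ * & P & 0\\ * & 0 & I\end{bmatrix}\succ0,\qquad \begin{bmatrix}\Theta_1 & \begin{bmatrix}\Theta_2 & \Theta_3\end{bmatrix}\\ * & \begin{bmatrix}\tfrac1\gamma P & 0\\ 0 & \gamma P\end{bmatrix}\end{bmatrix}\succeq0,$$ where $$\Theta_1=\begin{bmatrix}D_a^\top Y+Y^\top D_a-\lambda D_a^\top WD_a & Y^\top\\ * & \tfrac12\tilde Z\end{bmatrix},\quad \Theta_2=\begin{bmatrix}-Y^\top M\\ 0\end{bmatrix},\quad \Theta_3=\begin{bmatrix}0\\ G^\top\end{bmatrix}.$$ Then with $L=P^{-1}G$ we have $\rho(A-LC)<1$ and $$\tfrac12D_a^\top(I+ML)^{-\top}\Sigma_{r_\omega}^{-1}(L)(I+ML)^{-1}D_a-\lambda D_a^\top WD_a\succeq0,$$ i.e., $(L,\lambda)$ is feasible for the steady-state design problem $\max_{L,\lambda\in\mathbb{R}_+}\{\lambda:\ \tfrac12D_a^\top\Phi(\infty,L)^\top\Sigma_{r_\omega}^{-1}(L)\Phi(\infty,L)D_a-\lambda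 D_a^\top WD_a\succeq0,\ \rho(A-LC)<1\}$ with $\Phi(\infty,L)=(I+ML)^{-1}$; maximizing $\lambda$ subject to these LMIs thus approximates that problem.
   Context: System: $x(k+1)=Ax(k)+Bu(k)+B_\omega\omega(k)$, $y(k)=Cx(k)+D_\omega\omega(k)+y_a(k)$, $x\in\mathbb{R}^{n_x}$, $y\in\mathbb{R}^{n_y}$, $\omega(k)\sim\mathcal N(0,I_{n_\omega})$ i.i.d., $(A,C)$ detectable, $(A,B_\omega)$ stabilizable; observer $\hat x(k+1)=A\hat x+Bu+L(y-C\hat x)$ with residual $r=y-C\hat x$. Bias injection attack $y_a(k)=D_a\bar a$ for $k\ge0$ (zero before), with $D_a\in\mathbb{R}^{n_y\times n_a}$ having entries $(j_i,i)=1$ for compromised sensor indices $j_1<\dots<j_{n_a}$ and zeros elsewhere; $W\in\mathbb{R}^{n_y\times n_y}$ symmetric positive semidefinite. $\rho$ is spectral radius, $\mathbb{R}_+$ the positive reals, $\mathbb{S}^n_{\succ0}$ the symmetric positive definite $n\times n$ matrices, $*$ denotes blocks determined by symmetry, and $X^{-\top}=(X^{-1})^\top$. For stabilizing $L$, $\Sigma_{\tilde x}(L)$ solves $\Sigma=(A-LC)\Sigma(A-LC)^\top+(B_\omega-LD_\omega)(B_\omega-LD_\omega)^\top$ and $\Sigma_{r_\omega}(L)=C\Sigma_{\tilde x}(L)C^\top+D_\omega D_\omega^\top$ (assumed invertible). The steady-state transition matrix is $\Phi(\infty,L)=I-C(I-A+LC)^{-1}L$, which equals $(I+ML)^{-1}$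 for stabilizing $L$ when $A$ has no unit eigenvalue. *)

theory Defs
  imports "HOL-Analysis.Analysis"
begin

text \<open>Real matrices are HOL-Analysis matrices: an m x n real matrix is
  real^'n^'m (rows indexed by 'm). Dimensions are finite index types.\<close>

definition sym_mat :: "real^'n^'n \<Rightarrow> bool" where
  "sym_mat X \<longleftrightarrow> transpose X = X"

definition pos_def :: "real^'n^'n \<Rightarrow> bool" where
  "pos_def X \<longleftrightarrow> sym_mat X \<and> (\<forall>x. x \<noteq> 0 \<longrightarrow> x \<bullet> (X *v x) > 0)"

definition pos_semidef :: "real^'n^'n \<Rightarrow> bool" where
  "pos_semidef X \<longleftrightarrow> sym_mat X \<and> (\<forall>x. x \<bullet> (X *v x) \<ge> 0)"

text \<open>Block matrices [P Q; R S], vertical stacking [X; Y], and symmetric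
  blocks [P Q; * S] where * = Q transposed.\<close>
definition blk :: "real^'b^'a \<Rightarrow> real^'d^'a \<Rightarrow> real^'b^'c \<Rightarrow> real^'d^'c
                     \<Rightarrow> real^('b + 'd)^('a + 'c)" where
  "blk P Q R S = (\<chi> i j. case i of
      Inl a \<Rightarrow> (case j of Inl b \<Rightarrow> P $ a $ b | Inr d \<Rightarrow> Q $ a $ d)
    | Inr c \<Rightarrow> (case j of Inl b \<Rightarrow> R $ c $ b | Inr d \<Rightarrow> S $ c $ d))"

definition vstack :: "real^'b^'a \<Rightarrow> real^'b^'c \<Rightarrow> real^'b^('a + 'c)" where
  "vstack X Y = (\<chi> i. case i of Inl a \<Rightarrow> X $ a | Inr c \<Rightarrow> Y $ c)"

definition sblk :: "real^'a^'a \<Rightarrow> real^'c^'a \<Rightarrow> real^'c^'c \<Rightarrow> real^('a + 'c)^('a + 'c)" where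
  "sblk P Q S = blk P Q (transpose Q) S"

definition cmat :: "real^'n^'n \<Rightarrow> complex^'n^'n" where
  "cmat X = (\<chi> i j. complex_of_real (X $ i $ j))"

definition is_eigenvalue :: "real^'n^'n \<Rightarrow> complex \<Rightarrow> bool" where
  "is_eigenvalue X l \<longleftrightarrow> (\<exists>v::complex^'n. v \<noteq> 0 \<and> cmat X *v v = l *s v)"

definition spectral_radius :: "real^'n^'n \<Rightarrow> real" where
  "spectral_radius X = Max (cmod ` {l. is_eigenvalue X l})"

definition detectable :: "real^'n^'n \<Rightarrow> real^'n^'m \<Rightarrow> bool" where
  "detectable A C \<longleftrightarrow> (\<exists>L::real^'m^'n. spectral_radius (A - L ** C) < 1)"

definition stabilizable :: "real^'n^'n \<Rightarrow> real^'k^'n \<Rightarrow> bool" where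
  "stabilizable A B \<longleftrightarrow> (\<exists>K::real^'n^'k. spectral_radius (A - B ** K) < 1)"

text \<open>Steady-state estimation error covariance: the solution of the Lyapunov equation
  Sigma = (A-LC) Sigma (A-LC)^T + (B_w - L D_w)(B_w - L D_w)^T (unique for stabilizing L).\<close>
definition Sigma_x :: "real^'nx^'nx \<Rightarrow> real^'nx^'ny \<Rightarrow> real^'nw^'nx \<Rightarrow> real^'nw^'ny
                        \<Rightarrow> real^'ny^'nx \<Rightarrow> real^'nx^'nx" where
  "Sigma_x A C Bw Dw L = (THE S. S = (A - L ** C) ** S ** transpose (A - L ** C)
                                + (Bw - L ** Dw) ** transpose (Bw - L ** Dw))"

definition Sigma_r :: "real^'nx^'nx \<Rightarrow> real^'nx^'ny \<Rightarrow> real^'nw^'nx \<Rightarrow> real^'nw^'ny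
                        \<Rightarrow> real^'ny^'nx \<Rightarrow> real^'ny^'ny" where
  "Sigma_r A C Bw Dw L = C ** Sigma_x A C Bw Dw L ** transpose C + Dw ** transpose Dw"

end

theory Submission
  imports Defs "HOL-Computational_Algebra.Fundamental_Theorem_Algebra"
begin

text \<open>With L = P^-1 G and F = A - L C, E = B_w - L D_w, the first LMI is a Schur-complement form
  of the pair of Lyapunov inequalities F^T P F < P and F P^-1 F^T + E E^T < P^-1. The first makes
  F a strict contraction for the norm of P, so rho(F) < 1; the second, compared with the Lyapunov
  equation defining Sigma_x(L), gives Sigma_x(L) <= P^-1. The second LMI then yields
  Z Sigma_r(L) Z <= Z, that is Z <= Sigma_r(L)^-1. Finally, evaluating the third LMI at the vector
  (u, -x, L x, L x / gamma) with x = (I + M L)^-1 D_a u makes all terms containing Y or G cancel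
  and leaves lambda |D_a u|_W^2 <= x^T Z x / 2 <= x^T Sigma_r(L)^-1 x / 2.\<close>

lemma matrix_add_rdistrib: "(A + B) ** C = A ** C + B ** (C :: 'a::semiring_1^_^_)"
  by (simp add: matrix_matrix_mult_def vec_eq_iff sum.distrib distrib_right)

lemma matrix_diff_ldistrib: "A ** (B - C) = A ** B - A ** (C :: 'a::ring_1^_^_)"
  by (simp add: matrix_matrix_mult_def vec_eq_iff sum_subtractf right_diff_distrib)

lemma matrix_vector_mult_minus_right [simp]: "A *v (- x) = - (A *v x :: 'a::ring_1^_)"
  by (simp add: matrix_vector_mult_def vec_eq_iff sum_negf)

lemma matrix_vector_mult_minus_left [simp]: "(- A) *v x = - (A *v x :: 'a::ring_1^_)"
  by (simp add: matrix_vector_mult_def vec_eq_iff sum_negf)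

lemma transpose_add: "transpose (A + B) = transpose A + (transpose B :: 'a::semiring_1^_^_)"
  by (simp add: transpose_def vec_eq_iff)

lemma transpose_diff: "transpose (A - B) = transpose A - (transpose B :: 'a::ring_1^_^_)"
  by (simp add: transpose_def vec_eq_iff)

lemma inner_transpose_mult: "x \<bullet> (transpose A *v y) = (A *v x) \<bullet> (y :: real^_)"
  by (metis transpose_matrix_vector dot_lmul_matrix inner_commute)

lemma inner_mult_vec_transpose: "x \<bullet> (A *v y) = (transpose A *v x) \<bullet> (y :: real^_)"
  using inner_transpose_mult[of x "transpose A" y] by simp

lemma inner_mult_congruence:
  "x \<bullet> ((C ** S ** transpose C) *v y) = (transpose C *v x) \<bullet> (S *v (transpose C *v (y :: real^_)))"
  by (simp only: matrix_vector_mul_assoc[symmetric] inner_mult_vec_transpose)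

lemma inner_mult_gram: "x \<bullet> ((D ** transpose D) *v y) = (transpose D *v x) \<bullet> (transpose D *v (y :: real^_))"
  by (simp only: matrix_vector_mul_assoc[symmetric] inner_mult_vec_transpose)

definition vjoin :: "real^'a \<Rightarrow> real^'c \<Rightarrow> real^('a + 'c)" where
  "vjoin x y = (\<chi> i. case i of Inl a \<Rightarrow> x $ a | Inr c \<Rightarrow> y $ c)"

lemma sum_UNIV_Plus:
  "(\<Sum>i\<in>(UNIV::('a::finite + 'c::finite) set). f i) = (\<Sum>a\<in>UNIV. f (Inl a)) + (\<Sum>c\<in>UNIV. f (Inr c))"
  by (simp only: UNIV_Plus_UNIV[symmetric] sum.Plus finite comp_def)

lemma blk_mult_vjoin: "blk P Q R S *v vjoin x y = vjoin (P *v x + Q *v y) (R *v x + S *v y)"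
  by (simp add: vec_eq_iff blk_def vjoin_def matrix_vector_mult_def sum_UNIV_Plus split: sum.split)

lemma vstack_mult_vec: "vstack X Y *v c = vjoin (X *v c) (Y *v c)"
  by (simp add: vec_eq_iff vstack_def vjoin_def matrix_vector_mult_def split: sum.split)

lemma inner_vjoin: "vjoin a b \<bullet> vjoin c d = a \<bullet> c + b \<bullet> d"
  by (simp add: inner_vec_def vjoin_def sum_UNIV_Plus)

lemma vjoin_eq_0_iff [simp]: "vjoin x y = 0 \<longleftrightarrow> x = 0 \<and> y = 0"
  by (auto simp: vjoin_def vec_eq_iff split: sum.split)

lemma quadratic_form_sblk:
  "vjoin x y \<bullet> (sblk P Q S *v vjoin x y) = x \<bullet> (P *v x) + 2 * (x \<bullet> (Q *v y)) + y \<bullet> (S *v y)"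
proof -
  have "y \<bullet> (transpose Q *v x) = x \<bullet> (Q *v y)"
    by (simp only: inner_transpose_mult inner_commute)
  then show ?thesis
    by (simp add: sblk_def blk_mult_vjoin inner_vjoin inner_add_right)
qed

lemma quadratic_form_sblk3:
  "vjoin (vjoin a b) c \<bullet> (sblk (sblk X K S) (vstack E (0::real^'c^'b)) T *v vjoin (vjoin a b) c)
   = a \<bullet> (X *v a) + 2 * (a \<bullet> (K *v b)) + b \<bullet> (S *v b) + 2 * (a \<bullet> (E *v c)) + c \<bullet> (T *v c)"
  by (simp add: quadratic_form_sblk vstack_mult_vec inner_vjoin)

lemma quadratic_form_sblk_blk_diag:
  "vjoin (vjoin u w) (vjoin p q) \<bullet> (sblk (sblk T1 T2 T3) (blk N1 (0::real^'d^'a) (0::real^'c^'b) N2)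
      (blk S1 (0::real^'d^'c) (0::real^'c^'d) S2) *v vjoin (vjoin u w) (vjoin p q))
   = u \<bullet> (T1 *v u) + 2 * (u \<bullet> (T2 *v w)) + w \<bullet> (T3 *v w) + 2 * (u \<bullet> (N1 *v p) + w \<bullet> (N2 *v q))
     + p \<bullet> (S1 *v p) + q \<bullet> (S2 *v q)"
  by (simp add: quadratic_form_sblk blk_mult_vjoin inner_vjoin)

lemma sym_mat_iff_inner: "sym_mat X \<longleftrightarrow> (\<forall>x y. x \<bullet> (X *v y) = y \<bullet> (X *v x))"
proof
  assume "sym_mat X"
  then show "\<forall>x y. x \<bullet> (X *v y) = y \<bullet> (X *v x)"
    by (metis sym_mat_def inner_commute inner_transpose_mult)
next
  assume sym: "\<forall>x y. x \<bullet> (X *v y) = y \<bullet> (X *v x)"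
  have "X $ i $ j = X $ j $ i" for i j
    using sym[rule_format, of "axis i 1" "axis j 1"]
    by (simp add: inner_axis' matrix_vector_mult_basis column_def)
  then show "sym_mat X" by (simp add: sym_mat_def vec_eq_iff transpose_def)
qed

lemma sym_matD: "sym_mat X \<Longrightarrow> x \<bullet> (X *v y) = y \<bullet> (X *v x)"
  by (simp add: sym_mat_iff_inner)

lemma sym_mat_transpose_eq: "sym_mat S \<Longrightarrow> transpose S = S"
  by (simp add: sym_mat_def)

lemma pos_def_sym_mat: "pos_def X \<Longrightarrow> sym_mat X"
  by (simp add: pos_def_def)

lemma pos_semidef_sym_mat: "pos_semidef X \<Longrightarrow> sym_mat X"
  by (simp add: pos_semidef_def)

lemma pos_defD: "pos_def X \<Longrightarrow> x \<noteq> 0 \<Longrightarrow> 0 < x \<bullet> (X *v x)"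
  by (simp add: pos_def_def)

lemma pos_semidefD: "pos_semidef X \<Longrightarrow> 0 \<le> x \<bullet> (X *v x)"
  by (simp add: pos_semidef_def)

lemma invertible_if_kernel_0:
  fixes X :: "'a::field^'n^'n"
  assumes "\<And>x. X *v x = 0 \<Longrightarrow> x = 0"
  shows "invertible X"
  using assms vec.inj_iff_eq_0 matrix_left_invertible_injective invertible_left_inverse by metis

lemma matrix_inv_right: "invertible X \<Longrightarrow> X ** matrix_inv X = mat 1"
  and matrix_inv_left: "invertible X \<Longrightarrow> matrix_inv X ** X = mat 1"
  unfolding invertible_def matrix_inv_def by (metis (mono_tags, lifting) someI_ex)+

lemma matrix_inv_mult_vec_right: "invertible X \<Longrightarrow> X *v (matrix_inv X *v x) = x"
  and matrix_inv_mult_vec_left: "invertible X \<Longrightarrow> matrix_inv X *v (X *v x) = x"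
  by (simp_all add: matrix_vector_mul_assoc matrix_inv_right matrix_inv_left)

lemma matrix_mul_matrix_inv_cancel: "invertible P \<Longrightarrow> P ** (matrix_inv P ** G) = G"
  by (simp add: matrix_mul_assoc matrix_inv_right)

lemma pos_def_invertible: "pos_def X \<Longrightarrow> invertible X"
  by (metis invertible_if_kernel_0 pos_defD inner_zero_right less_irrefl)

lemma sym_mat_matrix_inv:
  assumes "sym_mat X" "invertible X"
  shows "sym_mat (matrix_inv X)"
proof -
  let ?Xi = "matrix_inv X"
  have "transpose ?Xi ** X = mat 1"
    using assms by (metis sym_mat_def matrix_transpose_mul matrix_inv_right transpose_mat)
  then have "transpose ?Xi = transpose ?Xi ** (X ** ?Xi)"
    using assms(2) by (simp add: matrix_inv_right)
  also have "\<dots> = ?Xi"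
    by (simp add: matrix_mul_assoc \<open>transpose ?Xi ** X = mat 1\<close>)
  finally show ?thesis by (simp add: sym_mat_def)
qed

lemma pos_def_matrix_inv:
  fixes X :: "real^'n^'n"
  assumes "pos_def X"
  shows "pos_def (matrix_inv X)"
  unfolding pos_def_def
proof (intro conjI allI impI)
  have inv: "invertible X" by (rule pos_def_invertible[OF assms])
  show "sym_mat (matrix_inv X)"
    by (rule sym_mat_matrix_inv[OF pos_def_sym_mat[OF assms] inv])
  fix x :: "real^'n" assume "x \<noteq> 0"
  then have "matrix_inv X *v x \<noteq> 0"
    using inv by (metis matrix_inv_mult_vec_right matrix_vector_mult_0_right)
  then have "0 < (matrix_inv X *v x) \<bullet> (X *v (matrix_inv X *v x))"
    by (rule pos_defD[OF assms])
  then show "0 < x \<bullet> (matrix_inv X *v x)"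
    by (simp add: matrix_inv_mult_vec_right[OF inv] inner_commute)
qed

lemma inner_matrix_inv_image:
  assumes "sym_mat P" "invertible P"
  shows "(P *v y) \<bullet> (matrix_inv P *v (P *v y)) = y \<bullet> (P *v y)"
  by (simp add: matrix_inv_mult_vec_left[OF assms(2)] inner_commute)

section \<open>Eigenvalues and the spectral radius\<close>

lemma mat_mult_vec: "(mat l :: 'a::comm_ring_1^'n^'n) *v v = l *s v"
  by (simp add: vec_eq_iff matrix_vector_mult_def mat_def if_distrib if_distribR sum.delta
      cong del: if_weak_cong)

lemma is_eigenvalue_iff_det: "is_eigenvalue X l \<longleftrightarrow> det (cmat X - mat l) = 0"
proof -
  have "is_eigenvalue X l \<longleftrightarrow> (\<exists>v. v \<noteq> 0 \<and> (cmat X - mat l) *v v = 0)"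
    by (simp add: is_eigenvalue_def matrix_vector_mult_diff_rdistrib mat_mult_vec)
  also have "\<dots> \<longleftrightarrow> \<not> invertible (cmat X - mat l)"
    by (metis invertible_if_kernel_0 inj_matrix_vector_mult injD matrix_vector_mult_0_right)
  finally show ?thesis by (simp add: invertible_det_nz)
qed

lemma is_eigenvalue_of_real:
  assumes "v \<noteq> 0" "X *v v = c *\<^sub>R v"
  shows "is_eigenvalue X (of_real c)"
proof -
  let ?w = "\<chi> j. complex_of_real (v $ j)"
  have "cmat X *v ?w = of_real c *s ?w"
    using assms(2) by (simp add: vec_eq_iff matrix_vector_mult_def cmat_def flip: of_real_mult of_real_sum)
  moreover have "?w \<noteq> 0" using assms(1) by (simp add: vec_eq_iff)
  ultimately show ?thesis unfolding is_eigenvalue_def by blast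
qed

text \<open>The characteristic polynomial det (cmat X - l I), expanded by the Leibniz formula so that
  its degree can be read off.\<close>

definition charpoly :: "real^'n^'n \<Rightarrow> complex poly" where
  "charpoly X = (\<Sum>p | p permutes (UNIV::'n set). smult (of_int (sign p))
      (\<Prod>i\<in>UNIV. if i = p i then [: cmat X $ i $ p i, -1 :] else [: cmat X $ i $ p i :]))"

lemma poly_charpoly: "poly (charpoly X) l = det (cmat X - mat l)"
proof -
  have "poly (if i = p i then [: cmat X $ i $ p i, -1 :] else [: cmat X $ i $ p i :]) l
          = (cmat X - mat l) $ i $ p i" for i p
    by (simp add: mat_def)
  then show ?thesis unfolding charpoly_def det_def poly_sum poly_smult poly_prod by simp
qed

lemma coeff_charpoly_card: "coeff (charpoly (X::real^'n^'n)) CARD('n) = (-1) ^ CARD('n)"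
proof -
  let ?n = "CARD('n)"
  let ?f = "\<lambda>p i. if i = p i then [: cmat X $ i $ p i, -1 :] else [: cmat X $ i $ p i :]"
  have other: "coeff (\<Prod>i\<in>UNIV. ?f p i) ?n = 0" if "p \<noteq> id" for p
  proof -
    obtain j where "p j \<noteq> j" using \<open>p \<noteq> id\<close> by (metis eq_id_iff)
    then have "{i. i = p i} \<subset> UNIV" by (metis (mono_tags) UNIV_I mem_Collect_eq psubsetI subsetI)
    then have "card {i. i = p i} < ?n" by (simp add: psubset_card_mono)
    have "degree (\<Prod>i\<in>UNIV. ?f p i) \<le> (\<Sum>i\<in>UNIV. degree (?f p i))"
      using degree_prod_sum_le[OF finite[of UNIV], of "?f p"] by (simp add: comp_def)
    also have "\<dots> = card {i. i = p i}"
      by (simp add: if_distrib sum.If_cases)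
    finally show ?thesis
      using \<open>card {i. i = p i} < ?n\<close> by (simp add: coeff_eq_0)
  qed
  have "degree (\<Prod>i\<in>UNIV. ?f id i) = ?n"
    by (subst degree_prod_sum_eq) auto
  moreover have "lead_coeff (\<Prod>i\<in>UNIV. ?f id i) = (-1) ^ ?n"
    by (simp add: lead_coeff_prod)
  ultimately have "coeff (\<Prod>i\<in>UNIV. ?f id i) ?n = (-1) ^ ?n" by simp
  moreover have "coeff (charpoly X) ?n = (\<Sum>p | p permutes UNIV. of_int (sign p) * coeff (\<Prod>i\<in>UNIV. ?f p i) ?n)"
    by (simp add: charpoly_def coeff_sum)
  moreover have "\<dots> = coeff (\<Prod>i\<in>UNIV. ?f id i) ?n"
    by (subst sum.mono_neutral_right[of _ "{id}"])
       (auto simp: finite_permutations permutes_id sign_id other)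
  ultimately show ?thesis by simp
qed

lemma finite_eigenvalues: "finite {l. is_eigenvalue (X::real^'n^'n) l}"
  and eigenvalues_nonempty: "{l. is_eigenvalue (X::real^'n^'n) l} \<noteq> {}"
proof -
  have roots: "{l. is_eigenvalue X l} = {l. poly (charpoly X) l = 0}"
    by (simp add: is_eigenvalue_iff_det poly_charpoly)
  have lead: "coeff (charpoly X) CARD('n) \<noteq> 0" by (simp add: coeff_charpoly_card)
  then show "finite {l. is_eigenvalue X l}"
    unfolding roots by (intro poly_roots_finite) auto
  have "0 < degree (charpoly X)"
    using le_degree[OF lead] by (metis finite_UNIV_card_ge_0 finite order.strict_trans2)
  then obtain z where "poly (charpoly X) z = 0" using alg_closed_imp_poly_has_root by blast
  then show "{l. is_eigenvalue X l} \<noteq> {}" unfolding roots by blast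
qed

lemma spectral_radius_less_iff: "spectral_radius X < r \<longleftrightarrow> (\<forall>l. is_eigenvalue X l \<longrightarrow> cmod l < r)"
  unfolding spectral_radius_def using finite_eigenvalues eigenvalues_nonempty by (subst Max_less_iff) auto

lemma eigenvector_Re_Im:
  fixes F :: "real^'n^'n"
  defines "vr \<equiv> \<lambda>v::complex^'n. \<chi> j. Re (v $ j)" and "vi \<equiv> \<lambda>v::complex^'n. \<chi> j. Im (v $ j)"
  assumes "cmat F *v v = \<mu> *s v"
  shows "F *v vr v = Re \<mu> *\<^sub>R vr v - Im \<mu> *\<^sub>R vi v"
    and "F *v vi v = Im \<mu> *\<^sub>R vr v + Re \<mu> *\<^sub>R vi v"
proof -
  have "(\<Sum>j\<in>UNIV. complex_of_real (F $ i $ j) * v $ j) = \<mu> * v $ i" for i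
    using assms(3) by (simp add: vec_eq_iff matrix_vector_mult_def cmat_def)
  then have "Re (\<Sum>j\<in>UNIV. complex_of_real (F $ i $ j) * v $ j) = Re (\<mu> * v $ i)"
    and "Im (\<Sum>j\<in>UNIV. complex_of_real (F $ i $ j) * v $ j) = Im (\<mu> * v $ i)" for i
    by simp_all
  then show "F *v vr v = Re \<mu> *\<^sub>R vr v - Im \<mu> *\<^sub>R vi v"
    and "F *v vi v = Im \<mu> *\<^sub>R vr v + Re \<mu> *\<^sub>R vi v"
    by (simp_all add: vec_eq_iff matrix_vector_mult_def vr_def vi_def Re_sum Im_sum algebra_simps)
qed

lemma quadratic_form_rotation:
  assumes "sym_mat P" "F *v x = a *\<^sub>R x - b *\<^sub>R y" "F *v y = b *\<^sub>R x + a *\<^sub>R y"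
  shows "(F *v x) \<bullet> (P *v (F *v x)) + (F *v y) \<bullet> (P *v (F *v y))
       = (a\<^sup>2 + b\<^sup>2) * (x \<bullet> (P *v x) + y \<bullet> (P *v y))"
  using sym_matD[OF assms(1), of y x] unfolding assms(2,3)
  by (simp add: algebra_simps power2_eq_square del: scaleR_matrix_vector_assoc)

lemma eigenvalue_norm_less_1_if_contraction:
  fixes F P :: "real^'n^'n"
  assumes P: "pos_def P"
    and contr: "\<And>x. x \<noteq> 0 \<Longrightarrow> (F *v x) \<bullet> (P *v (F *v x)) < x \<bullet> (P *v x)"
    and "is_eigenvalue F \<mu>"
  shows "cmod \<mu> < 1"
proof -
  obtain v where "v \<noteq> 0" and v: "cmat F *v v = \<mu> *s v"
    using \<open>is_eigenvalue F \<mu>\<close> unfolding is_eigenvalue_def by blast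
  define x where "x = (\<chi> j. Re (v $ j))"
  define y where "y = (\<chi> j. Im (v $ j))"
  define q where "q z = z \<bullet> (P *v z)" for z
  have le: "q (F *v z) \<le> q z" and nonneg: "0 \<le> q z" for z
    using contr[of z] pos_defD[OF P, of z] by (cases "z = 0"; simp add: q_def)+
  have "x \<noteq> 0 \<or> y \<noteq> 0"
    using \<open>v \<noteq> 0\<close> by (auto simp: x_def y_def vec_eq_iff complex_eq_iff)
  then have "q (F *v x) + q (F *v y) < q x + q y"
    using le[of x] le[of y] contr[of x] contr[of y] by (auto simp: q_def)
  moreover have "q (F *v x) + q (F *v y) = (cmod \<mu>)\<^sup>2 * (q x + q y)"
    unfolding q_def cmod_power2
    by (rule quadratic_form_rotation[OF pos_def_sym_mat[OF P]])
       (use eigenvector_Re_Im[OF v] in \<open>simp_all add: x_def y_def\<close>)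
  ultimately have "(cmod \<mu>)\<^sup>2 < 1"
    using nonneg[of x] nonneg[of y] by (simp add: mult_less_cancel_right2 mult_le_cancel_right1)
  then show ?thesis by (simp add: power_less_one_iff abs_square_less_1)
qed

section \<open>The discrete Lyapunov equation\<close>

lemma homogeneous_strict_less_imp_uniform:
  fixes f g :: "real^'n \<Rightarrow> real"
  assumes "continuous_on UNIV f" "continuous_on UNIV g"
    and f_hom: "\<And>r v. f (r *\<^sub>R v) = r\<^sup>2 * f v" and g_hom: "\<And>r v. g (r *\<^sub>R v) = r\<^sup>2 * g v"
    and g_pos: "\<And>v. v \<noteq> 0 \<Longrightarrow> 0 < g v" and less: "\<And>v. v \<noteq> 0 \<Longrightarrow> f v < g v"
  shows "\<exists>c<1. \<forall>v. f v \<le> c * g v"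
proof -
  let ?S = "sphere (0::real^'n) 1"
  have "g u \<noteq> 0" if "u \<in> ?S" for u
    using g_pos[of u] that by (metis less_irrefl mem_sphere_0 norm_zero zero_neq_one)
  then have "continuous_on ?S (\<lambda>u. f u / g u)"
    by (intro continuous_on_divide continuous_on_subset[OF assms(1)] continuous_on_subset[OF assms(2)]) auto
  moreover have "?S \<noteq> {}" by simp
  ultimately obtain u0 where "u0 \<in> ?S" and max: "\<And>u. u \<in> ?S \<Longrightarrow> f u / g u \<le> f u0 / g u0"
    using continuous_attains_sup[OF compact_sphere] by blast
  define c where "c = f u0 / g u0"
  have "u0 \<noteq> 0" using \<open>u0 \<in> ?S\<close> by auto
  then have "c < 1" using less g_pos by (simp add: c_def divide_less_eq_1)
  have "f v \<le> c * g v" for v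
  proof (cases "v = 0")
    case True
    then show ?thesis using f_hom[of 0 v] g_hom[of 0 v] by simp
  next
    case False
    define u where "u = (1 / norm v) *\<^sub>R v"
    have "u \<in> ?S" "u \<noteq> 0" using False by (auto simp: u_def)
    then have "f u \<le> c * g u"
      using max[OF \<open>u \<in> ?S\<close>] g_pos[OF \<open>u \<noteq> 0\<close>] by (simp add: c_def pos_divide_le_eq)
    then have "(norm v)\<^sup>2 * f u \<le> (norm v)\<^sup>2 * (c * g u)" by (simp add: mult_left_mono)
    moreover have "v = norm v *\<^sub>R u" using False by (simp add: u_def)
    ultimately show ?thesis by (metis f_hom g_hom mult.left_commute)
  qed
  with \<open>c < 1\<close> show ?thesis by blast
qed

lemma quadratic_form_ge_norm:
  fixes Q :: "real^'n^'n"
  assumes "pos_def Q"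
  shows "\<exists>m>0. \<forall>v. m * (norm v)\<^sup>2 \<le> v \<bullet> (Q *v v)"
proof -
  have "\<exists>c<1. \<forall>v. (norm v)\<^sup>2 - v \<bullet> (Q *v v) \<le> c * (norm v)\<^sup>2"
    using pos_defD[OF assms]
    by (intro homogeneous_strict_less_imp_uniform continuous_intros)
       (auto simp: matrix_vector_mult_scaleR power2_eq_square abs_mult_self_eq algebra_simps)
  then obtain c where "c < 1" "\<And>v. (norm v)\<^sup>2 - v \<bullet> (Q *v v) \<le> c * (norm v)\<^sup>2" by blast
  then show ?thesis by (intro exI[of _ "1 - c"]) (auto simp: algebra_simps)
qed

lemma iterates_tendsto_0_if_contraction:
  fixes F Q :: "real^'n^'n"
  assumes Q: "pos_def Q"
    and contr: "\<And>v. v \<noteq> 0 \<Longrightarrow> (F *v v) \<bullet> (Q *v (F *v v)) < v \<bullet> (Q *v v)"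
  shows "(\<lambda>k. ((*v) F ^^ k) v) \<longlonglongrightarrow> 0"
proof -
  define q where "q v = v \<bullet> (Q *v v)" for v
  have "continuous_on UNIV q" "continuous_on UNIV (\<lambda>v. q (F *v v))"
    unfolding q_def matrix_vector_mul_assoc by (intro continuous_intros)+
  moreover have "q (r *\<^sub>R v) = r\<^sup>2 * q v" for r v
    by (simp add: q_def matrix_vector_mult_scaleR power2_eq_square del: scaleR_matrix_vector_assoc)
  ultimately obtain c where "c < 1" and c: "\<And>v. q (F *v v) \<le> c * q v"
    using homogeneous_strict_less_imp_uniform[of "\<lambda>v. q (F *v v)" q] contr pos_defD[OF Q]
    by (auto simp: q_def matrix_vector_mult_scaleR simp del: scaleR_matrix_vector_assoc)
  obtain m where "m > 0" and m: "\<And>v. m * (norm v)\<^sup>2 \<le> q v"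
    using quadratic_form_ge_norm[OF Q] unfolding q_def by blast
  define c' where "c' = max c 0"
  have "0 \<le> c'" "c' < 1" using \<open>c < 1\<close> by (auto simp: c'_def)
  have q_nonneg: "0 \<le> q v" for v
    using pos_defD[OF Q, of v] by (cases "v = 0") (simp_all add: q_def)
  have iter: "q (((*v) F ^^ k) v) \<le> c' ^ k * q v" for k
  proof (induction k)
    case (Suc k)
    have "q (((*v) F ^^ Suc k) v) \<le> c' * q (((*v) F ^^ k) v)"
      using c[of "((*v) F ^^ k) v"] q_nonneg[of "((*v) F ^^ k) v"] by (simp add: c'_def max_mult_distrib_right)
    also have "\<dots> \<le> c' * (c' ^ k * q v)" using Suc \<open>0 \<le> c'\<close> by (rule mult_left_mono)
    finally show ?case by (simp add: mult_ac)
  qed simp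
  have bound: "norm (((*v) F ^^ k) v) \<le> sqrt (c' ^ k * (q v / m))" for k
    using m[of "((*v) F ^^ k) v"] iter[of k] \<open>m > 0\<close>
    by (intro real_le_rsqrt) (simp add: field_simps)
  have "(\<lambda>k. sqrt (c' ^ k * (q v / m))) \<longlonglongrightarrow> sqrt (0 * (q v / m))"
    using \<open>0 \<le> c'\<close> \<open>c' < 1\<close> by (intro tendsto_intros LIMSEQ_realpow_zero)
  then have lim: "(\<lambda>k. sqrt (c' ^ k * (q v / m))) \<longlonglongrightarrow> 0" by simp
  show ?thesis by (intro Lim_null_comparison[OF _ lim] always_eventually allI bound)
qed

lemma nonneg_if_lyapunov_decrease:
  fixes F X :: "real^'n^'n"
  assumes tend: "(\<lambda>k. ((*v) F ^^ k) v) \<longlonglongrightarrow> 0"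
    and decr: "\<And>w. (F *v w) \<bullet> (X *v (F *v w)) \<le> w \<bullet> (X *v w)"
  shows "0 \<le> v \<bullet> (X *v v)"
proof -
  define w where "w k = ((*v) F ^^ k) v" for k
  have le: "w k \<bullet> (X *v w k) \<le> v \<bullet> (X *v v)" for k
  proof (induction k)
    case (Suc k)
    then show ?case using decr[of "w k"] by (simp add: w_def)
  qed (simp add: w_def)
  have "(\<lambda>k. w k \<bullet> (X *v w k)) \<longlonglongrightarrow> 0 \<bullet> (X *v 0)"
    unfolding w_def
    by (intro tendsto_inner tend bounded_linear.tendsto[OF matrix_vector_mul_bounded_linear])
  then show ?thesis using le by (intro LIMSEQ_le_const2) auto
qed

lemma lyapunov_fixpoint_eq_0:
  fixes F D :: "real^'n^'n"
  assumes tend: "\<And>v. (\<lambda>k. ((*v) (transpose F) ^^ k) v) \<longlonglongrightarrow> 0"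
    and fixpoint: "D = F ** D ** transpose F"
  shows "D = 0"
proof -
  define w where "w u k = ((*v) (transpose F) ^^ k) u" for u k
  have step: "x \<bullet> (D *v y) = (transpose F *v x) \<bullet> (D *v (transpose F *v y))" for x y
    by (subst fixpoint) (simp only: matrix_vector_mul_assoc[symmetric] inner_mult_vec_transpose)
  have "x \<bullet> (D *v y) = w x k \<bullet> (D *v w y k)" for x y k
  proof (induction k)
    case (Suc k)
    then show ?case using step[of "w x k" "w y k"] by (simp add: w_def)
  qed (simp add: w_def)
  moreover have "(\<lambda>k. w x k \<bullet> (D *v w y k)) \<longlonglongrightarrow> 0 \<bullet> (D *v 0)" for x y
    unfolding w_def
    by (intro tendsto_inner tend bounded_linear.tendsto[OF matrix_vector_mul_bounded_linear])
  ultimately have "x \<bullet> (D *v y) = 0" for x y by (simp add: LIMSEQ_const_iff)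
  then have "D *v y = 0" for y by (metis inner_eq_zero_iff)
  then show ?thesis by (metis matrix_vector_mult_0 matrix_eq)
qed

lemma lyapunov_equation_unique:
  fixes F R :: "real^'n^'n"
  assumes tend: "\<And>v. (\<lambda>k. ((*v) (transpose F) ^^ k) v) \<longlonglongrightarrow> 0"
  shows "\<exists>!S. S = F ** S ** transpose F + R"
proof -
  define T where "T D = D - F ** D ** transpose F" for D :: "real^'n^'n"
  have lin: "linear T"
    unfolding T_def
    by (rule linearI) (simp_all add: matrix_add_ldistrib matrix_add_rdistrib matrix_scalar_ac
        scalar_matrix_assoc[symmetric] scaleR_diff_right)
  have "inj T"
    unfolding linear_injective_0[OF lin] T_def using lyapunov_fixpoint_eq_0[OF tend] by simp
  then have "bij T" using linear_inj_imp_surj[OF lin] by (simp add: bij_def)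
  then have "\<exists>!S. T S = R" by (simp add: bij_iff)
  moreover have "T S = R \<longleftrightarrow> S = F ** S ** transpose F + R" for S
    by (simp add: T_def diff_eq_eq add.commute)
  ultimately show ?thesis by simp
qed

section \<open>Schur complements of block LMIs\<close>

lemma pos_def_sblk_schur_left:
  fixes X :: "real^'a^'a" and K :: "real^'b^'a" and S :: "real^'b^'b"
    and R :: "real^'c^('a + 'b)" and T :: "real^'c^'c"
  assumes pd: "pos_def (sblk (sblk X K S) R T)" and X: "pos_def X" and "b \<noteq> 0"
  shows "(K *v b) \<bullet> (matrix_inv X *v (K *v b)) < b \<bullet> (S *v b)"
proof -
  define y where "y = K *v b"
  define a where "a = - (matrix_inv X *v y)"
  have inv: "invertible X" by (rule pos_def_invertible[OF X])
  have "0 < vjoin (vjoin a b) 0 \<bullet> (sblk (sblk X K S) R T *v vjoin (vjoin a b) 0)"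
    using pos_defD[OF pd] \<open>b \<noteq> 0\<close> by simp
  also have "\<dots> = a \<bullet> (X *v a) + 2 * (a \<bullet> y) + b \<bullet> (S *v b)"
    by (simp add: quadratic_form_sblk y_def)
  also have "\<dots> = b \<bullet> (S *v b) - y \<bullet> (matrix_inv X *v y)"
    by (simp add: a_def matrix_inv_mult_vec_right[OF inv] inner_commute)
  finally show ?thesis by (simp add: y_def)
qed

lemma pos_def_sblk3_schur:
  fixes X :: "real^'a^'a" and K :: "real^'b^'a" and S :: "real^'b^'b" and E :: "real^'c^'a"
  assumes pd: "pos_def (sblk (sblk X K S) (vstack E (0::real^'c^'b)) (mat 1))"
    and S: "pos_def S" and "x \<noteq> 0"
  shows "(transpose K *v x) \<bullet> (matrix_inv S *v (transpose K *v x))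
           + (transpose E *v x) \<bullet> (transpose E *v x) < x \<bullet> (X *v x)"
proof -
  define y where "y = transpose K *v x"
  define z where "z = transpose E *v x"
  define b where "b = - (matrix_inv S *v y)"
  have inv: "invertible S" by (rule pos_def_invertible[OF S])
  have "0 < vjoin (vjoin x b) (- z) \<bullet>
      (sblk (sblk X K S) (vstack E (0::real^'c^'b)) (mat 1) *v vjoin (vjoin x b) (- z))"
    using pos_defD[OF pd] \<open>x \<noteq> 0\<close> by simp
  also have "\<dots> = x \<bullet> (X *v x) + 2 * (y \<bullet> b) + b \<bullet> (S *v b) - 2 * (z \<bullet> z) + z \<bullet> z"
    unfolding quadratic_form_sblk3 inner_mult_vec_transpose[of x K] inner_mult_vec_transpose[of x E]
      y_def[symmetric] z_def[symmetric]
    by simp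
  also have "\<dots> = x \<bullet> (X *v x) - y \<bullet> (matrix_inv S *v y) - z \<bullet> z"
    by (simp add: b_def matrix_inv_mult_vec_right[OF inv] inner_commute)
  finally show ?thesis by (simp add: y_def z_def)
qed

section \<open>Steady-state covariances\<close>

lemma Sigma_x_lyapunov_eq:
  fixes A :: "real^'nx^'nx" and C :: "real^'nx^'ny" and Bw :: "real^'nw^'nx"
    and Dw :: "real^'nw^'ny" and L :: "real^'ny^'nx"
  defines "F \<equiv> A - L ** C" and "E \<equiv> Bw - L ** Dw" and "S \<equiv> Sigma_x A C Bw Dw L"
  assumes tend: "\<And>v. (\<lambda>k. ((*v) (transpose F) ^^ k) v) \<longlonglongrightarrow> 0"
  shows "S = F ** S ** transpose F + E ** transpose E" and "sym_mat S"
proof -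
  have unique: "\<exists>!S. S = F ** S ** transpose F + E ** transpose E"
    by (rule lyapunov_equation_unique[OF tend])
  then show S: "S = F ** S ** transpose F + E ** transpose E"
    unfolding S_def Sigma_x_def F_def[symmetric] E_def[symmetric] by (rule theI')
  have "transpose S = transpose (F ** S ** transpose F + E ** transpose E)"
    by (simp only: S[symmetric])
  also have "\<dots> = F ** transpose S ** transpose F + E ** transpose E"
    by (simp add: transpose_add matrix_transpose_mul matrix_mul_assoc)
  finally have "transpose S = S" using unique S by blast
  then show "sym_mat S" by (simp add: sym_mat_def)
qed

lemma Sigma_x_lyapunov_bound:
  fixes A :: "real^'nx^'nx" and C :: "real^'nx^'ny" and Bw :: "real^'nw^'nx"
    and Dw :: "real^'nw^'ny" and L :: "real^'ny^'nx" and Q :: "real^'nx^'nx"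
  defines "F \<equiv> A - L ** C" and "E \<equiv> Bw - L ** Dw" and "S \<equiv> Sigma_x A C Bw Dw L"
  assumes Q: "pos_def Q"
    and dual: "\<And>v. v \<noteq> 0 \<Longrightarrow> (transpose F *v v) \<bullet> (Q *v (transpose F *v v))
                 + (transpose E *v v) \<bullet> (transpose E *v v) < v \<bullet> (Q *v v)"
  shows "sym_mat S" and "0 \<le> v \<bullet> (S *v v)" and "v \<bullet> (S *v v) \<le> v \<bullet> (Q *v v)"
proof -
  have "(transpose F *v v) \<bullet> (Q *v (transpose F *v v)) < v \<bullet> (Q *v v)" if "v \<noteq> 0" for v
    using dual[OF that] inner_ge_zero[of "transpose E *v v"] by linarith
  then have tend: "(\<lambda>k. ((*v) (transpose F) ^^ k) v) \<longlonglongrightarrow> 0" for v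
    by (rule iterates_tendsto_0_if_contraction[OF Q])
  note S = Sigma_x_lyapunov_eq[of A L C Bw Dw, folded F_def E_def S_def, OF tend]
  show "sym_mat S" by (rule S(2))
  have quad: "w \<bullet> (S *v w) = (transpose F *v w) \<bullet> (S *v (transpose F *v w))
                 + (transpose E *v w) \<bullet> (transpose E *v w)" for w
  proof -
    have "w \<bullet> (S *v w) = w \<bullet> ((F ** S ** transpose F + E ** transpose E) *v w)"
      by (simp only: S(1)[symmetric])
    then show ?thesis
      by (simp only: matrix_vector_mult_add_rdistrib inner_add_right inner_mult_congruence inner_mult_gram)
  qed
  show "0 \<le> v \<bullet> (S *v v)"
  proof (rule nonneg_if_lyapunov_decrease[OF tend])
    fix w
    show "(transpose F *v w) \<bullet> (S *v (transpose F *v w)) \<le> w \<bullet> (S *v w)"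
      using quad[of w] inner_ge_zero[of "transpose E *v w"] by linarith
  qed
  have "0 \<le> v \<bullet> ((Q - S) *v v)"
  proof (rule nonneg_if_lyapunov_decrease[OF tend])
    fix w
    show "(transpose F *v w) \<bullet> ((Q - S) *v (transpose F *v w)) \<le> w \<bullet> ((Q - S) *v w)"
      using quad[of w] dual[of w]
      by (cases "w = 0") (simp_all add: matrix_vector_mult_diff_rdistrib inner_diff_right)
  qed
  then show "v \<bullet> (S *v v) \<le> v \<bullet> (Q *v v)"
    by (simp add: matrix_vector_mult_diff_rdistrib inner_diff_right)
qed

lemma inner_Sigma_r:
  "x \<bullet> (Sigma_r A C Bw Dw L *v y) = (transpose C *v x) \<bullet> (Sigma_x A C Bw Dw L *v (transpose C *v y))
     + (transpose Dw *v x) \<bullet> (transpose Dw *v y)"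
  by (simp only: Sigma_r_def matrix_vector_mult_add_rdistrib inner_add_right inner_mult_congruence
      inner_mult_gram)

lemma sym_mat_Sigma_r: "sym_mat (Sigma_x A C Bw Dw L) \<Longrightarrow> sym_mat (Sigma_r A C Bw Dw L)"
  unfolding sym_mat_iff_inner inner_Sigma_r by (simp add: inner_commute)

lemma le_matrix_inv_if_congruence_le:
  fixes S Z :: "real^'n^'n"
  assumes S: "sym_mat S" "\<And>x. 0 \<le> x \<bullet> (S *v x)" "invertible S"
    and le: "\<And>x. (Z *v x) \<bullet> (S *v (Z *v x)) \<le> x \<bullet> (Z *v x)"
  shows "x \<bullet> (Z *v x) \<le> x \<bullet> (matrix_inv S *v x)"
proof -
  define y where "y = matrix_inv S *v x"
  have Sy: "S *v y = x" by (simp add: y_def matrix_inv_mult_vec_right[OF S(3)])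
  have "0 \<le> (y - Z *v x) \<bullet> (S *v (y - Z *v x))" by (rule S(2))
  also have "\<dots> = y \<bullet> x - 2 * (x \<bullet> (Z *v x)) + (Z *v x) \<bullet> (S *v (Z *v x))"
    using sym_matD[OF S(1), of y "Z *v x"]
    by (simp add: Sy matrix_vector_mult_diff_distrib inner_diff_left inner_diff_right inner_commute)
  also have "\<dots> \<le> x \<bullet> (matrix_inv S *v x) - x \<bullet> (Z *v x)"
    using le[of x] by (simp add: y_def inner_commute)
  finally show ?thesis by simp
qed

section \<open>Consequences of the three LMIs\<close>

lemma lmi1_consequences:
  fixes A :: "real^'nx^'nx" and C :: "real^'nx^'ny" and Bw :: "real^'nw^'nx"
    and Dw :: "real^'nw^'ny" and P :: "real^'nx^'nx" and G L :: "real^'ny^'nx"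
  assumes P: "pos_def P" and L: "L = matrix_inv P ** G"
    and LMI1: "pos_def (sblk (sblk P (P ** A - G ** C) P)
                              (vstack (P ** Bw - G ** Dw) (0 :: real^'nw^'nx)) (mat 1))"
  shows "spectral_radius (A - L ** C) < 1"
    and "sym_mat (Sigma_x A C Bw Dw L)"
    and "0 \<le> v \<bullet> (Sigma_x A C Bw Dw L *v v)"
    and "v \<bullet> (Sigma_x A C Bw Dw L *v v) \<le> v \<bullet> (matrix_inv P *v v)"
proof -
  define F where "F = A - L ** C"
  define E where "E = Bw - L ** Dw"
  have inv: "invertible P" and sym: "sym_mat P"
    using P by (simp_all add: pos_def_invertible pos_def_sym_mat)
  have "P ** L = G" using L by (simp add: matrix_mul_matrix_inv_cancel[OF inv])
  then have lmi: "pos_def (sblk (sblk P (P ** F) P) (vstack (P ** E) (0 :: real^'nw^'nx)) (mat 1))"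
    using LMI1 by (simp add: F_def E_def matrix_diff_ldistrib matrix_mul_assoc)
  have "(F *v b) \<bullet> (P *v (F *v b)) < b \<bullet> (P *v b)" if "b \<noteq> 0" for b
    using pos_def_sblk_schur_left[OF lmi P that] inner_matrix_inv_image[OF sym inv, of "F *v b"]
    by (simp add: matrix_vector_mul_assoc)
  then show "spectral_radius (A - L ** C) < 1"
    unfolding spectral_radius_less_iff F_def[symmetric]
    by (blast intro: eigenvalue_norm_less_1_if_contraction[OF P])
  have "(transpose F *v v) \<bullet> (matrix_inv P *v (transpose F *v v))
          + (transpose E *v v) \<bullet> (transpose E *v v) < v \<bullet> (matrix_inv P *v v)" if "v \<noteq> 0" for v
  proof -
    have "matrix_inv P *v v \<noteq> 0"
      using that by (metis matrix_inv_mult_vec_right[OF inv] matrix_vector_mult_0_right)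
    from pos_def_sblk3_schur[OF lmi P this] show ?thesis
      by (simp add: matrix_transpose_mul sym_mat_transpose_eq[OF sym] inner_commute
          matrix_vector_mul_assoc[symmetric] matrix_inv_mult_vec_right[OF inv]
          del: transpose_matrix_vector)
  qed
  from Sigma_x_lyapunov_bound[OF pos_def_matrix_inv[OF P], of A L C Bw Dw, folded F_def E_def, OF this]
  show "sym_mat (Sigma_x A C Bw Dw L)"
    and "0 \<le> v \<bullet> (Sigma_x A C Bw Dw L *v v)"
    and "v \<bullet> (Sigma_x A C Bw Dw L *v v) \<le> v \<bullet> (matrix_inv P *v v)"
    by blast+
qed

lemma lmi2_le_inverse_Sigma_r:
  fixes A :: "real^'nx^'nx" and C :: "real^'nx^'ny" and Bw :: "real^'nw^'nx"
    and Dw :: "real^'nw^'ny" and P :: "real^'nx^'nx" and Z :: "real^'ny^'ny" and L :: "real^'ny^'nx"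
  assumes P: "pos_def P" and Z: "sym_mat Z"
    and LMI2: "pos_def (sblk (sblk Z (Z ** C) P) (vstack (Z ** Dw) (0 :: real^'nw^'nx)) (mat 1))"
    and Sx_sym: "sym_mat (Sigma_x A C Bw Dw L)"
    and Sx_nonneg: "\<And>v. 0 \<le> v \<bullet> (Sigma_x A C Bw Dw L *v v)"
    and Sx_le: "\<And>v. v \<bullet> (Sigma_x A C Bw Dw L *v v) \<le> v \<bullet> (matrix_inv P *v v)"
    and Sr_inv: "invertible (Sigma_r A C Bw Dw L)"
  shows "x \<bullet> (Z *v x) \<le> x \<bullet> (matrix_inv (Sigma_r A C Bw Dw L) *v x)"
proof (rule le_matrix_inv_if_congruence_le[OF _ _ Sr_inv])
  show "sym_mat (Sigma_r A C Bw Dw L)" by (rule sym_mat_Sigma_r[OF Sx_sym])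
  show "0 \<le> y \<bullet> (Sigma_r A C Bw Dw L *v y)" for y
    by (simp add: inner_Sigma_r Sx_nonneg)
  show "(Z *v y) \<bullet> (Sigma_r A C Bw Dw L *v (Z *v y)) \<le> y \<bullet> (Z *v y)" for y
  proof (cases "y = 0")
    case False
    from pos_def_sblk3_schur[OF LMI2 P False] Sx_le[of "transpose C *v (Z *v y)"]
    show ?thesis
      by (simp add: inner_Sigma_r matrix_transpose_mul sym_mat_transpose_eq[OF Z] matrix_vector_mul_assoc[symmetric]
          del: transpose_matrix_vector)
  qed simp
qed

lemma invertible_one_minus_if_not_eigenvalue:
  assumes "\<not> is_eigenvalue A 1"
  shows "invertible (mat 1 - A)"
proof (rule invertible_if_kernel_0)
  fix z assume "(mat 1 - A) *v z = 0"
  then have "A *v z = 1 *\<^sub>R z" by (simp add: matrix_vector_mult_diff_rdistrib)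
  then show "z = 0" using assms is_eigenvalue_of_real[of z A 1] by auto
qed

lemma invertible_one_plus_ML:
  fixes A :: "real^'nx^'nx" and C :: "real^'nx^'ny" and L :: "real^'ny^'nx"
  assumes IA: "invertible (mat 1 - A)" and not_eig: "\<not> is_eigenvalue (A - L ** C) 1"
  shows "invertible (mat 1 + C ** matrix_inv (mat 1 - A) ** L)"
proof (rule invertible_if_kernel_0)
  fix v assume v0: "(mat 1 + C ** matrix_inv (mat 1 - A) ** L) *v v = 0"
  define z where "z = matrix_inv (mat 1 - A) *v (L *v v)"
  have v: "v = - (C *v z)"
    using v0 by (simp add: z_def matrix_vector_mult_add_rdistrib matrix_vector_mul_assoc matrix_mul_assoc
        eq_neg_iff_add_eq_0)
  have "(mat 1 - A) *v z = L *v v" by (simp add: z_def matrix_inv_mult_vec_right[OF IA])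
  then have "(A - L ** C) *v z = 1 *\<^sub>R z"
    by (simp add: v matrix_vector_mult_diff_rdistrib matrix_vector_mul_assoc[symmetric] algebra_simps)
  then have "z = 0" using not_eig is_eigenvalue_of_real[of z "A - L ** C" 1] by auto
  then show "v = 0" by (simp add: v)
qed

lemma matrix_inv_one_plus_mult_vec:
  assumes "invertible (mat 1 + M ** L)"
  shows "d = matrix_inv (mat 1 + M ** L) *v d + M *v (L *v (matrix_inv (mat 1 + M ** L) *v d))"
proof -
  have "d = (mat 1 + M ** L) *v (matrix_inv (mat 1 + M ** L) *v d)"
    by (simp only: matrix_inv_mult_vec_right[OF assms])
  then show ?thesis
    by (simp only: matrix_vector_mult_add_rdistrib matrix_vector_mul_lid flip: matrix_vector_mul_assoc)
qed

lemma lmi3_bound: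
  fixes Da Y :: "real^'na^'ny" and W Z :: "real^'ny^'ny" and M :: "real^'nx^'ny"
    and G L :: "real^'ny^'nx" and P :: "real^'nx^'nx"
  assumes LMI3: "pos_semidef (sblk
                 (sblk (transpose Da ** Y + transpose Y ** Da - lam *\<^sub>R (transpose Da ** W ** Da))
                       (transpose Y) ((1/2) *\<^sub>R Z))
                 (blk (- (transpose Y ** M)) (0 :: real^'nx^'na) (0 :: real^'nx^'ny) (transpose G))
                 (blk ((1 / gamma) *\<^sub>R P) (0 :: real^'nx^'nx) (0 :: real^'nx^'nx) (gamma *\<^sub>R P)))"
    and G: "G = P ** L" and gamma: "gamma > 0"
    and x: "Da *v u = x + M *v (L *v x)"
  shows "lam * ((Da *v u) \<bullet> (W *v (Da *v u))) \<le> (1/2) * (x \<bullet> (Z *v x))"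
proof -
  define y where "y = L *v x"
  define s where "s = y \<bullet> (P *v y)"
  define t where "t = Y *v u"
  define w where "w = (Da *v u) \<bullet> (W *v (Da *v u))"
  let ?\<Theta> = "transpose Da ** Y + transpose Y ** Da - lam *\<^sub>R (transpose Da ** W ** Da)"
  have "0 \<le> u \<bullet> (?\<Theta> *v u) + 2 * (u \<bullet> (transpose Y *v - x)) + (- x) \<bullet> ((1/2) *\<^sub>R Z *v - x)
      + 2 * (u \<bullet> (- (transpose Y ** M) *v y) + (- x) \<bullet> (transpose G *v ((1/gamma) *\<^sub>R y)))
      + y \<bullet> ((1 / gamma) *\<^sub>R P *v y) + ((1/gamma) *\<^sub>R y) \<bullet> (gamma *\<^sub>R P *v ((1/gamma) *\<^sub>R y))"
    using pos_semidefD[OF LMI3, of "vjoin (vjoin u (- x)) (vjoin y ((1/gamma) *\<^sub>R y))"]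
    unfolding quadratic_form_sblk_blk_diag .
  also have "\<dots> = (1/2) * (x \<bullet> (Z *v x)) - lam * w"
  proof -
    have "u \<bullet> (?\<Theta> *v u) = 2 * (t \<bullet> (Da *v u)) - lam * w"
      by (simp add: t_def w_def matrix_vector_mult_diff_rdistrib matrix_vector_mult_add_rdistrib
          inner_diff_right inner_add_right matrix_vector_mul_assoc[symmetric] inner_transpose_mult
          inner_commute del: transpose_matrix_vector flip: scaleR_matrix_vector_assoc)
    moreover have "t \<bullet> (Da *v u) = t \<bullet> x + t \<bullet> (M *v y)"
      by (simp add: x y_def inner_add_right)
    moreover have "u \<bullet> (transpose Y *v - x) = - (t \<bullet> x)"
      by (simp add: t_def inner_transpose_mult del: transpose_matrix_vector)
    moreover have "u \<bullet> (- (transpose Y ** M) *v y) = - (t \<bullet> (M *v y))"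
      by (simp add: t_def inner_transpose_mult matrix_vector_mul_assoc[symmetric] del: transpose_matrix_vector)
    moreover have "(- x) \<bullet> (transpose G *v ((1/gamma) *\<^sub>R y)) = - (s / gamma)"
      by (simp add: s_def G y_def inner_transpose_mult matrix_vector_mul_assoc[symmetric] inner_commute
          del: transpose_matrix_vector scaleR_matrix_vector_assoc)
    moreover have "((1/gamma) *\<^sub>R y) \<bullet> (gamma *\<^sub>R P *v ((1/gamma) *\<^sub>R y)) = s / gamma"
      using gamma by (simp add: s_def matrix_vector_mult_scaleR power2_eq_square
          flip: scaleR_matrix_vector_assoc)
    ultimately show ?thesis
      by (simp add: s_def flip: scaleR_matrix_vector_assoc)
  qed
  finally show ?thesis by (simp add: w_def)
qed

lemma pos_semidef_weighted_difference:
  fixes D :: "real^'a^'b" and H R W :: "real^'b^'b"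
  assumes R: "sym_mat R" and W: "sym_mat W"
    and bound: "\<And>u. lam * ((D *v u) \<bullet> (W *v (D *v u))) \<le> (1/2) * ((H *v (D *v u)) \<bullet> (R *v (H *v (D *v u))))"
  shows "pos_semidef ((1/2) *\<^sub>R (transpose D ** transpose H ** R ** H ** D) - lam *\<^sub>R (transpose D ** W ** D))"
  unfolding pos_semidef_def
proof
  show "sym_mat ((1/2) *\<^sub>R (transpose D ** transpose H ** R ** H ** D) - lam *\<^sub>R (transpose D ** W ** D))"
    using R W by (simp add: sym_mat_def transpose_diff transpose_scalar matrix_transpose_mul matrix_mul_assoc)
  have "u \<bullet> ((transpose D ** transpose H ** R ** H ** D) *v u) = (H *v (D *v u)) \<bullet> (R *v (H *v (D *v u)))"
    and "u \<bullet> ((transpose D ** W ** D) *v u) = (D *v u) \<bullet> (W *v (D *v u))" for u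
    by (simp_all add: matrix_vector_mul_assoc[symmetric] inner_transpose_mult del: transpose_matrix_vector)
  then show "\<forall>u. 0 \<le> u \<bullet> (((1/2) *\<^sub>R (transpose D ** transpose H ** R ** H ** D)
                                - lam *\<^sub>R (transpose D ** W ** D)) *v u)"
    using bound by (simp add: matrix_vector_mult_diff_rdistrib inner_diff_right
        flip: scaleR_matrix_vector_assoc)
qed

theorem theorem4:
  fixes A :: "real^'nx^'nx" and C :: "real^'nx^'ny"
    and Bw :: "real^'nw^'nx" and Dw :: "real^'nw^'ny"
    and W :: "real^'ny^'ny" and Da :: "real^'na^'ny"
    and idx :: "'na \<Rightarrow> 'ny"
    and P :: "real^'nx^'nx" and Z :: "real^'ny^'ny"
    and G :: "real^'ny^'nx" and Y :: "real^'na^'ny"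
    and M :: "real^'nx^'ny" and L :: "real^'ny^'nx"
    and lam gamma :: real
  assumes det: "detectable A C"
    and stab: "stabilizable A Bw"
    and W_psd: "pos_semidef W"
    and idx_inj: "inj idx"
    and Da_def: "Da = (\<chi> j i. if j = idx i then 1 else 0)"
    and no_eig1: "\<not> is_eigenvalue A 1"
    and M_def: "M = C ** matrix_inv (mat 1 - A)"
    and gamma_pos: "gamma > 0"
    and lam_pos: "lam > 0"
    and P_pd: "pos_def P"
    and Z_pd: "pos_def Z"
    and LMI1: "pos_def (sblk (sblk P (P ** A - G ** C) P)
                              (vstack (P ** Bw - G ** Dw) (0 :: real^'nw^'nx))
                              (mat 1))"
    and LMI2: "pos_def (sblk (sblk Z (Z ** C) P)
                              (vstack (Z ** Dw) (0 :: real^'nw^'nx))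
                              (mat 1))"
    and LMI3: "pos_semidef (sblk
                 (sblk (transpose Da ** Y + transpose Y ** Da - lam *\<^sub>R (transpose Da ** W ** Da))
                       (transpose Y) ((1/2) *\<^sub>R Z))
                 (blk (- (transpose Y ** M)) (0 :: real^'nx^'na) (0 :: real^'nx^'ny) (transpose G))
                 (blk ((1 / gamma) *\<^sub>R P) (0 :: real^'nx^'nx) (0 :: real^'nx^'nx) (gamma *\<^sub>R P)))"
    and Sr_inv: "invertible (Sigma_r A C Bw Dw (matrix_inv P ** G))"
    and L_def: "L = matrix_inv P ** G"
  shows "spectral_radius (A - L ** C) < 1 \<and>
         pos_semidef ((1/2) *\<^sub>R (transpose Da ** transpose (matrix_inv (mat 1 + M ** L))
                        ** matrix_inv (Sigma_r A C Bw Dw L) ** matrix_inv (mat 1 + M ** L) ** Da)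
                      - lam *\<^sub>R (transpose Da ** W ** Da))"
proof -
  note Sx = lmi1_consequences[OF P_pd L_def LMI1]
  have Sr_inv': "invertible (Sigma_r A C Bw Dw L)" using Sr_inv by (simp add: L_def)
  have Z_le: "x \<bullet> (Z *v x) \<le> x \<bullet> (matrix_inv (Sigma_r A C Bw Dw L) *v x)" for x
    by (rule lmi2_le_inverse_Sigma_r[OF P_pd pos_def_sym_mat[OF Z_pd] LMI2 Sx(2-4) Sr_inv'])
  have "\<not> is_eigenvalue (A - L ** C) 1" using Sx(1) by (auto simp: spectral_radius_less_iff)
  then have H: "invertible (mat 1 + M ** L)"
    using invertible_one_plus_ML[OF invertible_one_minus_if_not_eigenvalue[OF no_eig1]] by (simp add: M_def)
  have G: "G = P ** L" by (simp add: L_def matrix_mul_matrix_inv_cancel pos_def_invertible[OF P_pd])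
  have "lam * ((Da *v u) \<bullet> (W *v (Da *v u))) \<le> (1/2) * ((matrix_inv (mat 1 + M ** L) *v (Da *v u))
          \<bullet> (matrix_inv (Sigma_r A C Bw Dw L) *v (matrix_inv (mat 1 + M ** L) *v (Da *v u))))" for u
    using lmi3_bound[OF LMI3 G gamma_pos matrix_inv_one_plus_mult_vec[OF H], where u = u]
      Z_le[of "matrix_inv (mat 1 + M ** L) *v (Da *v u)"] by linarith
  then show ?thesis
    using Sx(1) pos_semidef_weighted_difference[OF sym_mat_matrix_inv[OF sym_mat_Sigma_r[OF Sx(2)] Sr_inv']
        pos_semidef_sym_mat[OF W_psd]] by blast
qed

end
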